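(* Let $i\colon Y\to X$ be a continuous bijection between topological spaces. If $X$ is homeomorphic to a subspace of a separable Hausdorff space, then so is $Y$. *)

theory Defs
  imports "HOL-Analysis.Analysis"
begin

definition embeds_in_sep_Hausdorff :: "'c itself \<Rightarrow> 'a topology \<Rightarrow> bool" where
  "embeds_in_sep_Hausdorff _ X \<longleftrightarrow>
     (\<exists>(Z::'c topology) S. separable_space Z \<and> Hausdorff_space Z \<and> S \<subseteq> topspace Z \<and>
        X homeomorphic_space subtopology Z S)"

end

theory Submission
  imports Defs
begin

text \<open>Let \<open>g : Y \<rightarrow> Z\<close> be the continuous injection obtained by composing \<open>i\<close> with an embedding
of \<open>X\<close> into a separable Hausdorff space \<open>Z\<close>, and let \<open>D\<close> be a countable dense subset of \<open>Z\<close>.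
Adjoin to \<open>Y\<close> the countably many points \<open>(d, k) \<in> D \<times> \<nat>\<close>, each isolated, and declare a
neighbourhood of \<open>y \<in> Y\<close> to be \<open>U \<union> {(d, k). d \<in> V, k \<ge> n}\<close> with \<open>U\<close> open around \<open>y\<close> in \<open>Y\<close>
and \<open>V\<close> open around \<open>g y\<close> in \<open>Z\<close>. Then \<open>Y\<close> is a subspace, the adjoined points are dense, and
two points of \<open>Y\<close> are separated by pulling back disjoint neighbourhoods of their distinct
images under \<open>g\<close>. Finally, a point of a separable Hausdorff space is determined by the traces
of its neighbourhoods on the dense set, so such a space can be realised on \<open>nat set set\<close>.\<close>

lemma homeomorphic_map_pullback_inv_into:
  assumes "inj_on f (topspace X)"
  shows "homeomorphic_map X (pullback_topology (f ` topspace X) (inv_into (topspace X) f) X) f"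
  unfolding homeomorphic_map_maps homeomorphic_maps_def
proof (intro exI conjI)
  let ?g = "inv_into (topspace X) f"
  show "continuous_map (pullback_topology (f ` topspace X) ?g X) X ?g"
    using continuous_map_pullback[of X X id] by simp
  have "continuous_map X X (?g \<circ> f)"
    by (rule continuous_map_eq[OF continuous_map_id]) (simp add: assms)
  then show "continuous_map X (pullback_topology (f ` topspace X) ?g X) f"
    by (rule continuous_map_pullback') auto
qed (use assms in \<open>auto simp: topspace_pullback_topology f_inv_into_f\<close>)

lemma separable_Hausdorff_space_inj_nat_set_set:
  assumes "separable_space X" "Hausdorff_space X"
  obtains f :: "'a \<Rightarrow> nat set set" where "inj_on f (topspace X)"
proof -
  obtain D where D: "countable D" "D \<subseteq> topspace X" "X closure_of D = topspace X"
    using assms(1) unfolding separable_space_def by blast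
  define e where "e = to_nat_on D"
  have e: "inj_on e D"
    unfolding e_def using D(1) by (simp add: inj_on_to_nat_on)
  define f where "f x = {e ` (U \<inter> D) | U. openin X U \<and> x \<in> U}" for x
  have "inj_on f (topspace X)"
  proof (rule inj_onI, rule ccontr)
    fix x y assume xy: "x \<in> topspace X" "y \<in> topspace X" "x \<noteq> y" and "f x = f y"
    obtain U V where UV: "openin X U" "openin X V" "x \<in> U" "y \<in> V" "disjnt U V"
      using assms(2) xy unfolding Hausdorff_space_def by metis
    have "e ` (U \<inter> D) \<in> f y"
      using \<open>f x = f y\<close> UV unfolding f_def by blast
    then obtain W where W: "openin X W" "y \<in> W" "e ` (W \<inter> D) = e ` (U \<inter> D)"
      unfolding f_def by auto
    then have "W \<inter> D = U \<inter> D"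
      using e by (simp add: inj_on_image_eq_iff)
    moreover have "D \<inter> (W \<inter> V) \<noteq> {}"
      using D(3) W UV openin_Int[of X W V] unfolding dense_intersects_open by blast
    ultimately show False
      using UV(5) unfolding disjnt_def by blast
  qed
  then show thesis by (rule that)
qed

lemma embeds_in_sep_Hausdorff_nat_set_set:
  assumes "embeds_in_sep_Hausdorff TYPE('c) X"
  shows "embeds_in_sep_Hausdorff TYPE(nat set set) X"
proof -
  obtain Z :: "'c topology" and S where Z: "separable_space Z" "Hausdorff_space Z"
    and S: "S \<subseteq> topspace Z" and X: "X homeomorphic_space subtopology Z S"
    using assms unfolding embeds_in_sep_Hausdorff_def by blast
  obtain f :: "'c \<Rightarrow> nat set set" where "inj_on f (topspace Z)"
    using separable_Hausdorff_space_inj_nat_set_set[OF Z] by blast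
  then obtain Z' :: "nat set set topology" where f: "homeomorphic_map Z Z' f"
    using homeomorphic_map_pullback_inv_into by blast
  then have "Z homeomorphic_space Z'"
    using homeomorphic_map_imp_homeomorphic_space by blast
  then have Z': "separable_space Z'" "Hausdorff_space Z'"
    using Z homeomorphic_separable_space homeomorphic_Hausdorff_space by blast+
  have f_topspace: "f ` topspace Z = topspace Z'"
    using f by (rule homeomorphic_imp_surjective_map)
  have "homeomorphic_map (subtopology Z S) (subtopology Z' (f ` S)) f"
    by (rule homeomorphic_map_subtopologies[OF f]) (use S f_topspace in blast)
  then have "X homeomorphic_space subtopology Z' (f ` S)"
    using X homeomorphic_map_imp_homeomorphic_space homeomorphic_space_trans by blast
  moreover have "f ` S \<subseteq> topspace Z'"
    using S f_topspace by blast
  ultimately show ?thesis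
    unfolding embeds_in_sep_Hausdorff_def using Z' by blast
qed

locale tail_extension =
  fixes Y :: "'a topology" and T :: "'c topology" and g :: "'a \<Rightarrow> 'c" and D :: "'c set"
  assumes continuous: "continuous_map Y T g"
    and D_subset: "D \<subseteq> topspace T"
begin

definition tail_nbhd :: "'c set \<Rightarrow> 'a set \<Rightarrow> nat \<Rightarrow> ('a + 'c \<times> nat) set" where
  "tail_nbhd V U n = Inl ` {y \<in> U. g y \<in> V} \<union> Inr ` ((V \<inter> D) \<times> {n..})"

definition tail_space :: "('a + 'c \<times> nat) topology" where
  "tail_space = topology_generated_by
     ({tail_nbhd V U n | V U n. openin T V \<and> openin Y U} \<union> {{Inr (d, k)} | d k. d \<in> D})"

lemma Inl_in_tail_nbhd [simp]: "Inl y \<in> tail_nbhd V U n \<longleftrightarrow> y \<in> U \<and> g y \<in> V"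
  unfolding tail_nbhd_def by auto

lemma disjnt_tail_nbhd: "disjnt V W \<Longrightarrow> disjnt (tail_nbhd V U n) (tail_nbhd W U' m)"
  unfolding tail_nbhd_def disjnt_def by auto

lemma openin_tail_nbhd: "openin T V \<Longrightarrow> openin Y U \<Longrightarrow> openin tail_space (tail_nbhd V U n)"
  unfolding tail_space_def by (rule topology_generated_by_Basis) blast

lemma openin_tail_point: "d \<in> D \<Longrightarrow> openin tail_space {Inr (d, k)}"
  unfolding tail_space_def by (rule topology_generated_by_Basis) blast

lemma g_topspace: "y \<in> topspace Y \<Longrightarrow> g y \<in> topspace T"
  using continuous continuous_map_image_subset_topspace by blast

lemma tail_nbhd_topspace:
  "tail_nbhd (topspace T) (topspace Y) n = Inl ` topspace Y \<union> Inr ` (D \<times> {n..})"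
  unfolding tail_nbhd_def using g_topspace D_subset by auto

lemma topspace_tail_space: "topspace tail_space = Inl ` topspace Y \<union> Inr ` (D \<times> UNIV)"
proof
  show "topspace tail_space \<subseteq> Inl ` topspace Y \<union> Inr ` (D \<times> UNIV)"
    unfolding tail_space_def topology_generated_by_topspace
    by (auto simp: tail_nbhd_def dest: openin_subset)
  show "Inl ` topspace Y \<union> Inr ` (D \<times> UNIV) \<subseteq> topspace tail_space"
    using openin_subset[OF openin_tail_nbhd[OF openin_topspace openin_topspace, of 0]]
    by (simp add: tail_nbhd_topspace)
qed

lemma openin_tail_space_contains_tail:
  assumes "openin tail_space Q" "Inl y \<in> Q"
  shows "\<exists>V n. openin T V \<and> g y \<in> V \<and> Inr ` ((V \<inter> D) \<times> {n..}) \<subseteq> Q"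
  using openin_topology_generated_by[OF assms(1)[unfolded tail_space_def]] assms(2)
proof (induction arbitrary: y)
  case (Int Q1 Q2)
  obtain V1 n1 where "openin T V1" "g y \<in> V1" "Inr ` ((V1 \<inter> D) \<times> {n1..}) \<subseteq> Q1"
    using Int.IH(1) Int.prems by blast
  moreover obtain V2 n2 where "openin T V2" "g y \<in> V2" "Inr ` ((V2 \<inter> D) \<times> {n2..}) \<subseteq> Q2"
    using Int.IH(2) Int.prems by blast
  ultimately show ?case
    by (intro exI[of _ "V1 \<inter> V2"] exI[of _ "max n1 n2"]) auto
next
  case (UN K)
  from UN.prems obtain Q where "Q \<in> K" "Inl y \<in> Q"
    by blast
  then obtain V n where "openin T V" "g y \<in> V" "Inr ` ((V \<inter> D) \<times> {n..}) \<subseteq> Q"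
    using UN.IH by meson
  then show ?case
    using \<open>Q \<in> K\<close> by blast
next
  case (Basis Q)
  then obtain V U n where "openin T V" "Q = tail_nbhd V U n"
    by auto
  then show ?case
    using Basis.prems by (intro exI[of _ V] exI[of _ n]) (auto simp: tail_nbhd_def)
qed simp

lemma continuous_map_Inl_tail_space: "continuous_map Y tail_space Inl"
  unfolding tail_space_def
proof (rule continuous_on_generated_topo)
  fix Q assume "Q \<in> {tail_nbhd V U n | V U n. openin T V \<and> openin Y U} \<union> {{Inr (d, k)} | d k. d \<in> D}"
  then consider V U n where "openin T V" "openin Y U" "Q = tail_nbhd V U n" | d k where "Q = {Inr (d, k)}"
    by blast
  then show "openin Y (Inl -` Q \<inter> topspace Y)"
  proof cases
    case 1
    then have "Inl -` Q \<inter> topspace Y = U \<inter> {y \<in> topspace Y. g y \<in> V}"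
      using openin_subset by (fastforce simp: tail_nbhd_def)
    then show ?thesis
      using 1 continuous by (simp add: continuous_map_def openin_Int)
  next
    case 2
    then have "Inl -` Q \<inter> topspace Y = {}" by auto
    then show ?thesis by simp
  qed
qed (use tail_space_def topspace_tail_space in auto)

lemma embedding_map_Inl_tail_space: "embedding_map Y tail_space Inl"
proof -
  let ?S = "Inl ` topspace Y"
  have "open_map Y (subtopology tail_space ?S) Inl"
    unfolding open_map_def
  proof (intro allI impI)
    fix U assume U: "openin Y U"
    have "Inl ` U = tail_nbhd (topspace T) U 0 \<inter> ?S"
      using openin_subset[OF U] g_topspace by (auto simp: tail_nbhd_def)
    then show "openin (subtopology tail_space ?S) (Inl ` U)"
      using U by (simp add: openin_subtopology_Int openin_tail_nbhd)
  qed
  then have "embedding_map Y (subtopology tail_space ?S) Inl"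
    using continuous_map_Inl_tail_space
    by (intro injective_open_imp_embedding_map) (auto simp: continuous_map_in_subtopology)
  then show ?thesis
    by (simp add: embedding_map_in_subtopology)
qed

lemma separable_tail_space:
  assumes "countable D" and dense: "T closure_of D = topspace T"
  shows "separable_space tail_space"
  unfolding separable_space_def
proof (intro exI conjI)
  let ?P = "Inr ` (D \<times> UNIV) :: ('a + 'c \<times> nat) set"
  show "countable ?P" using assms(1) by auto
  show "?P \<subseteq> topspace tail_space" by (simp add: topspace_tail_space)
  show "tail_space closure_of ?P = topspace tail_space"
    unfolding dense_intersects_open
  proof (intro allI impI)
    fix Q assume "openin tail_space Q \<and> Q \<noteq> {}"
    then obtain x where Q: "openin tail_space Q" and x: "x \<in> Q" by blast
    show "?P \<inter> Q \<noteq> {}"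
    proof (cases x)
      case (Inl y)
      then obtain V n where V: "openin T V" "g y \<in> V" and tail: "Inr ` ((V \<inter> D) \<times> {n..}) \<subseteq> Q"
        using openin_tail_space_contains_tail[OF Q] x by blast
      have "D \<inter> V \<noteq> {}"
        using dense[unfolded dense_intersects_open, rule_format, of V] V by blast
      then obtain d where "d \<in> D" "d \<in> V" by blast
      then have "Inr (d, n) \<in> ?P \<inter> Q"
        using tail by blast
      then show ?thesis by blast
    next
      case (Inr p)
      have "x \<in> topspace tail_space"
        using openin_subset[OF Q] x by blast
      then show ?thesis
        using x Inr by (auto simp: topspace_tail_space)
    qed
  qed
qed

lemma Hausdorff_tail_space:
  assumes "Hausdorff_space T" "inj_on g (topspace Y)"
  shows "Hausdorff_space tail_space"
proof -
  let ?P = "Inr ` (D \<times> UNIV) :: ('a + 'c \<times> nat) set"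
  have isolated: "openin tail_space {p}" if "p \<in> ?P" for p
    using that openin_tail_point by auto
  have Inl_Inr: "\<exists>U V. openin tail_space U \<and> openin tail_space V \<and> Inl y \<in> U \<and> p \<in> V \<and> disjnt U V"
    if y: "y \<in> topspace Y" and p: "p \<in> ?P" for y p
  proof -
    obtain d k where "p = Inr (d, k)"
      using p by blast
    then have "disjnt (tail_nbhd (topspace T) (topspace Y) (Suc k)) {p}"
      by (auto simp: tail_nbhd_topspace disjnt_def)
    moreover have "Inl y \<in> tail_nbhd (topspace T) (topspace Y) (Suc k)"
      using y g_topspace by simp
    ultimately show ?thesis
      using openin_tail_nbhd[OF openin_topspace openin_topspace] isolated[OF p] by blast
  qed
  have Inl_Inl: "\<exists>U V. openin tail_space U \<and> openin tail_space V \<and> Inl y \<in> U \<and> Inl z \<in> V \<and> disjnt U V"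
    if yz: "y \<in> topspace Y" "z \<in> topspace Y" "y \<noteq> z" for y z
  proof -
    have "g y \<noteq> g z"
      using assms(2) yz unfolding inj_on_def by blast
    moreover have "g y \<in> topspace T" "g z \<in> topspace T"
      using g_topspace yz by auto
    ultimately obtain V W where "openin T V" "openin T W" "g y \<in> V" "g z \<in> W" "disjnt V W"
      using assms(1)[unfolded Hausdorff_space_def, rule_format, of "g y" "g z"] by blast
    then show ?thesis
      using yz openin_tail_nbhd[OF _ openin_topspace] disjnt_tail_nbhd
      by (metis Inl_in_tail_nbhd)
  qed
  show ?thesis
    unfolding Hausdorff_space_def
  proof (intro allI impI)
    fix x z assume "x \<in> topspace tail_space \<and> z \<in> topspace tail_space \<and> x \<noteq> z"
    then have x: "x \<in> Inl ` topspace Y \<union> ?P" and z: "z \<in> Inl ` topspace Y \<union> ?P" and "x \<noteq> z"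
      by (auto simp: topspace_tail_space)
    then consider
      (LL) y y' where "x = Inl y" "z = Inl y'" "y \<in> topspace Y" "y' \<in> topspace Y" "y \<noteq> y'"
    | (LR) y where "x = Inl y" "y \<in> topspace Y" "z \<in> ?P"
    | (RL) y where "z = Inl y" "y \<in> topspace Y" "x \<in> ?P"
    | (RR) "x \<in> ?P" "z \<in> ?P"
      by blast
    then show "\<exists>U V. openin tail_space U \<and> openin tail_space V \<and> x \<in> U \<and> z \<in> V \<and> disjnt U V"
    proof cases
      case LL
      then show ?thesis using Inl_Inl by blast
    next
      case LR
      then show ?thesis using Inl_Inr by blast
    next
      case RL
      then show ?thesis using Inl_Inr[of y x] disjnt_sym by blast
    next
      case RR
      then show ?thesis
        using isolated \<open>x \<noteq> z\<close> by (intro exI[of _ "{x}"] exI[of _ "{z}"]) auto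
    qed
  qed
qed

end

lemma continuous_injection_into_separable_Hausdorff_embeds:
  fixes Y :: "'a topology" and T :: "'c topology"
  assumes "continuous_map Y T g" "inj_on g (topspace Y)"
    and "separable_space T" "Hausdorff_space T"
  shows "embeds_in_sep_Hausdorff TYPE('a + 'c \<times> nat) Y"
proof -
  obtain D where D: "countable D" "D \<subseteq> topspace T" "T closure_of D = topspace T"
    using assms(3) unfolding separable_space_def by blast
  interpret tail_extension Y T g D
    using assms(1) D(2) by unfold_locales
  have "Y homeomorphic_space subtopology tail_space (Inl ` topspace Y)"
    using embedding_map_Inl_tail_space embedding_map_imp_homeomorphic_space by blast
  moreover have "Inl ` topspace Y \<subseteq> topspace tail_space"
    by (simp add: topspace_tail_space)
  ultimately show ?thesis
    unfolding embeds_in_sep_Hausdorff_def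
    using separable_tail_space[OF D(1,3)] Hausdorff_tail_space[OF assms(4,2)] by blast
qed

theorem mainTheorem18:
  fixes Y :: "'a topology" and X :: "'b topology" and i :: "'a \<Rightarrow> 'b"
  assumes "continuous_map Y X i"
    and "bij_betw i (topspace Y) (topspace X)"
    and "embeds_in_sep_Hausdorff TYPE('c) X"
  shows "embeds_in_sep_Hausdorff TYPE(nat set set) Y"
proof -
  obtain Z :: "'c topology" and S where Z: "separable_space Z" "Hausdorff_space Z"
    and X: "X homeomorphic_space subtopology Z S"
    using assms(3) unfolding embeds_in_sep_Hausdorff_def by blast
  then obtain h where h: "homeomorphic_map X (subtopology Z S) h"
    using homeomorphic_space by blast
  have "continuous_map Y Z (h \<circ> i)"
    using continuous_map_compose[OF assms(1) homeomorphic_imp_continuous_map[OF h]]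
      continuous_map_in_subtopology by blast
  moreover have "inj_on (h \<circ> i) (topspace Y)"
    using assms(2) h unfolding homeomorphic_map_def bij_betw_def by (simp add: comp_inj_on)
  ultimately have "embeds_in_sep_Hausdorff TYPE('a + 'c \<times> nat) Y"
    using continuous_injection_into_separable_Hausdorff_embeds Z by blast
  then show ?thesis
    by (rule embeds_in_sep_Hausdorff_nat_set_set)
qed

end
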